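(* Let $\lambda=(\lambda_1,\ldots,\lambda_n)\in\mathbb{R}_{<0}^n$ have pairwise distinct entries. Then $\nu_{k,\lambda}(t)\ge 0$ for all $t\ge 0$ and all $k=0,\ldots,n-1$.
   Context: $V_\lambda$ is the $n\times n$ Vandermonde matrix with $(i,j)$ entry $\lambda_j^{i-1}$, and the Vandermonde basis functions are defined by $[\nu_{0,\lambda}(t),\ldots,\nu_{n-1,\lambda}(t)]=[e^{\lambda_1 t},\ldots,e^{\lambda_n t}]V_\lambda^{-1}$. *)

theory Defs
  imports Complex_Main "Jordan_Normal_Form.Matrix"
begin

text \<open>Vandermonde matrix, 0-indexed: entry (i,j) is lam j ^ i, i,j < n.
  This is the paper's (i,j) entry lambda_j^(i-1) with 1-based indices.\<close>
definition vandermonde :: "nat \<Rightarrow> (nat \<Rightarrow> real) \<Rightarrow> real mat" where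
  "vandermonde n lam = mat n n (\<lambda>(i, j). lam j ^ i)"

definition vandermonde_inv :: "nat \<Rightarrow> (nat \<Rightarrow> real) \<Rightarrow> real mat" where
  "vandermonde_inv n lam = (SOME W. W \<in> carrier_mat n n \<and>
      vandermonde n lam * W = 1\<^sub>m n \<and> W * vandermonde n lam = 1\<^sub>m n)"

text \<open>Vandermonde basis functions: the row vector [exp(lam_0 t), ..., exp(lam_(n-1) t)]
  times V^{-1}; nu k t is its k-th entry (k = 0..n-1).\<close>
definition vandermonde_basis :: "nat \<Rightarrow> (nat \<Rightarrow> real) \<Rightarrow> nat \<Rightarrow> real \<Rightarrow> real" where
  "vandermonde_basis n lam k t =
     (row (mat 1 n (\<lambda>(_, j). exp (lam j * t)) * vandermonde_inv n lam) 0) $ k"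

end

theory Submission
  imports Defs "HOL-Computational_Algebra.Polynomial" "Jordan_Normal_Form.Determinant"
begin

text \<open>The row vector \<open>\<nu>(t) = E V\<^sup>-\<^sup>1\<close>, with \<open>E = (e\<^bsup>\<lambda>\<^sub>0 t\<^esup>, \<dots>, e\<^bsup>\<lambda>\<^bsub>n-1\<^esub> t\<^esup>)\<close>, is the
  coefficient vector of the polynomial of degree \<open>< n\<close> interpolating \<open>x \<mapsto> e\<^bsup>x t\<^esup>\<close> at the
  nodes \<open>\<lambda>\<^sub>i\<close>. In Newton form this polynomial is \<open>\<Sum>\<^bsub>m<n\<^esub> d\<^sub>m(t) (x - \<lambda>\<^sub>0) \<cdots> (x - \<lambda>\<^bsub>m-1\<^esub>)\<close>,
  where \<open>d\<^sub>m(t)\<close> is the divided difference of \<open>x \<mapsto> e\<^bsup>x t\<^esup>\<close> at \<open>\<lambda>\<^sub>0, \<dots>, \<lambda>\<^sub>m\<close>. The Newton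
  products have nonnegative coefficients because the nodes are negative. As functions of \<open>t\<close>,
  the divided differences satisfy \<open>d\<^bsub>m+1\<^esub>' = \<lambda>\<^bsub>m+1\<^esub> d\<^bsub>m+1\<^esub> + d\<^sub>m\<close> and \<open>d\<^bsub>m+1\<^esub>(0) = 0\<close>, so an
  integrating factor shows inductively that they are nonnegative for \<open>t \<ge> 0\<close>. The same
  equations show that the Newton sum evaluated at a node \<open>\<lambda>\<^sub>j\<close> solves \<open>u' = \<lambda>\<^sub>j u\<close>, \<open>u(0) = 1\<close>,
  hence equals \<open>e\<^bsup>\<lambda>\<^sub>j t\<^esup>\<close>: this is the interpolation property.\<close>

lemma poly_eq_sum_lessThan:
  fixes p :: "'a::comm_semiring_1 poly"
  assumes "degree p < n"
  shows "poly p x = (\<Sum>k<n. coeff p k * x ^ k)"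
proof -
  have "poly p x = (\<Sum>k\<le>degree p. coeff p k * x ^ k)" by (rule poly_altdef)
  also have "\<dots> = (\<Sum>k<n. coeff p k * x ^ k)"
    by (rule sum.mono_neutral_left) (use assms in \<open>auto simp: coeff_eq_0\<close>)
  finally show ?thesis .
qed

lemma coeff_mult_nonneg:
  fixes p q :: "'a::ordered_cancel_comm_semiring poly"
  assumes "\<And>k. coeff p k \<ge> 0" "\<And>k. coeff q k \<ge> 0"
  shows "coeff (p * q) k \<ge> 0"
  unfolding coeff_mult by (rule sum_nonneg) (simp add: assms)

lemma lagrange_basis_poly_exists:
  fixes lam :: "nat \<Rightarrow> 'a::field"
  assumes "inj_on lam {..<n}" "j < n"
  shows "\<exists>p. degree p < n \<and> (\<forall>k<n. poly p (lam k) = (if k = j then 1 else 0))"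
proof -
  define c where "c = (\<Prod>i\<in>{..<n}-{j}. lam j - lam i)"
  define p where "p = smult (1 / c) (\<Prod>i\<in>{..<n}-{j}. [:- lam i, 1:])"
  have "degree p \<le> (\<Sum>i\<in>{..<n}-{j}. degree [:- lam i, 1:])"
    unfolding p_def using degree_prod_sum_le[of "{..<n}-{j}" "\<lambda>i. [:- lam i, 1:]"]
    by (simp add: o_def)
  also have "\<dots> < n" using assms(2) by (simp add: card_Diff_singleton)
  finally have "degree p < n" .
  have "c \<noteq> 0"
    unfolding c_def using assms by (auto dest: inj_onD)
  then have "poly p (lam k) = (if k = j then 1 else 0)" if "k < n" for k
    using that by (auto simp: p_def poly_prod c_def intro!: prod_zero)
  with \<open>degree p < n\<close> show ?thesis by blast
qed

lemma vandermonde_inv_is_inverse: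
  assumes "inj_on lam {..<n}"
  shows "vandermonde_inv n lam \<in> carrier_mat n n"
    and "vandermonde n lam * vandermonde_inv n lam = 1\<^sub>m n"
proof -
  obtain L where L: "\<And>j. j < n \<Longrightarrow>
      degree (L j) < n \<and> (\<forall>k<n. poly (L j) (lam k) = (if k = j then 1 else 0))"
    using lagrange_basis_poly_exists[OF assms] by metis
  define W where "W = mat n n (\<lambda>(j, l). coeff (L j) l)"
  let ?V = "vandermonde n lam"
  have V: "?V \<in> carrier_mat n n" and W: "W \<in> carrier_mat n n"
    by (simp_all add: vandermonde_def W_def)
  have WV: "W * ?V = 1\<^sub>m n"
  proof (rule eq_matI)
    fix j k assume j: "j < dim_row (1\<^sub>m n)" and k: "k < dim_col (1\<^sub>m n)"
    have "(W * ?V) $$ (j, k) = (\<Sum>l<n. coeff (L j) l * lam k ^ l)"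
      using j k by (simp add: W_def vandermonde_def scalar_prod_def atLeast0LessThan)
    also have "\<dots> = poly (L j) (lam k)"
      using L[of j] j by (intro poly_eq_sum_lessThan[symmetric]) simp
    finally show "(W * ?V) $$ (j, k) = 1\<^sub>m n $$ (j, k)" using L[of j] j k by simp
  qed (auto simp: W_def vandermonde_def)
  have VW: "?V * W = 1\<^sub>m n"
    using WV by (rule mat_mult_left_right_inverse[OF W V])
  have "vandermonde_inv n lam \<in> carrier_mat n n \<and>
      ?V * vandermonde_inv n lam = 1\<^sub>m n \<and> vandermonde_inv n lam * ?V = 1\<^sub>m n"
    unfolding vandermonde_inv_def by (rule someI[of _ W]) (use W WV VW in auto)
  then show "vandermonde_inv n lam \<in> carrier_mat n n" "?V * vandermonde_inv n lam = 1\<^sub>m n"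
    by auto
qed

lemma vandermonde_basis_eq_coeff_interpolant:
  assumes "inj_on lam {..<n}" "k < n"
    and "degree Q < n" "\<And>j. j < n \<Longrightarrow> poly Q (lam j) = exp (lam j * t)"
  shows "vandermonde_basis n lam k t = coeff Q k"
proof -
  let ?V = "vandermonde n lam" and ?W = "vandermonde_inv n lam"
  define E where "E = mat 1 n (\<lambda>(_, j). exp (lam j * t))"
  define A where "A = mat 1 n (\<lambda>(_, l). coeff Q l)"
  have A: "A \<in> carrier_mat 1 n" by (simp add: A_def)
  have AV: "A * ?V = E"
  proof (rule eq_matI)
    fix i j assume i: "i < dim_row E" and j: "j < dim_col E"
    have "(A * ?V) $$ (i, j) = (\<Sum>l<n. coeff Q l * lam j ^ l)"
      using i j by (simp add: A_def E_def vandermonde_def scalar_prod_def atLeast0LessThan)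
    also have "\<dots> = poly Q (lam j)" using assms(3) by (simp add: poly_eq_sum_lessThan)
    finally show "(A * ?V) $$ (i, j) = E $$ (i, j)" using i j assms(4) by (simp add: E_def)
  qed (auto simp: A_def E_def vandermonde_def)
  have "E * ?W = A * (?V * ?W)"
    unfolding AV[symmetric]
    using A vandermonde_inv_is_inverse(1)[OF assms(1)]
    by (intro assoc_mult_mat) (auto simp: vandermonde_def)
  also have "\<dots> = A" using vandermonde_inv_is_inverse(2)[OF assms(1)] A by simp
  finally have "E * ?W = A" .
  moreover have "vandermonde_basis n lam k t = (E * ?W) $$ (0, k)"
    unfolding vandermonde_basis_def E_def[symmetric]
    using assms(2) vandermonde_inv_is_inverse(1)[OF assms(1)] by (simp add: E_def)
  ultimately show ?thesis using assms(2) by (simp add: A_def)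
qed

lemma has_real_derivative_integrating_factor:
  assumes "(u has_real_derivative c * u s + g) (at s)"
  shows "((\<lambda>s. exp (- c * s) * u s) has_real_derivative exp (- c * s) * g) (at s)"
proof -
  have "((\<lambda>s. exp (- c * s) * u s) has_real_derivative
      - c * exp (- c * s) * u s + exp (- c * s) * (c * u s + g)) (at s)"
    by (auto intro!: derivative_eq_intros assms)
  then show ?thesis by (simp add: algebra_simps)
qed

lemma linear_ode_solution:
  assumes "\<And>s. (u has_real_derivative c * u s) (at s)"
  shows "u s = u 0 * exp (c * s)"
proof -
  have "\<And>s. ((\<lambda>s. exp (- c * s) * u s) has_real_derivative 0) (at s)"
    using has_real_derivative_integrating_factor[of u c _ 0] assms by simp
  then have "exp (- c * s) * u s = exp (- c * 0) * u 0"
    using DERIV_isconst_all by blast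
  then show ?thesis by (simp add: exp_minus field_simps)
qed

lemma linear_ode_nonneg:
  assumes "\<And>s. (u has_real_derivative c * u s + g s) (at s)"
    and "\<And>s. s \<ge> 0 \<Longrightarrow> g s \<ge> 0" and "u 0 \<ge> 0" and "s \<ge> 0"
  shows "u s \<ge> 0"
proof -
  let ?v = "\<lambda>s. exp (- c * s) * u s"
  have deriv: "(?v has_real_derivative exp (- c * s) * g s) (at s)" for s
    by (rule has_real_derivative_integrating_factor[OF assms(1)])
  have "?v 0 \<le> ?v s"
  proof (rule DERIV_nonneg_imp_increasing_open[OF assms(4)])
    show "\<exists>y. (?v has_real_derivative y) (at x) \<and> 0 \<le> y" if "0 < x" for x
      using deriv[of x] assms(2)[of x] that by (intro exI[of _ "exp (- c * x) * g x"]) simp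
    show "continuous_on {0..s} ?v"
      using deriv by (meson DERIV_continuous continuous_at_imp_continuous_on)
  qed
  then have "0 \<le> ?v s" using assms(3) by simp
  then show ?thesis by (simp add: zero_le_mult_iff)
qed

definition newton_poly :: "(nat \<Rightarrow> 'a::comm_ring_1) \<Rightarrow> nat \<Rightarrow> 'a poly" where
  "newton_poly lam m = (\<Prod>i<m. [:- lam i, 1:])"

lemma degree_newton_poly: "degree (newton_poly lam m) \<le> m"
  unfolding newton_poly_def
  using degree_prod_sum_le[of "{..<m}" "\<lambda>i. [:- lam i, 1:]"] by (simp add: o_def)

lemma newton_poly_Suc: "newton_poly lam (Suc m) = newton_poly lam m * [:- lam m, 1:]"
  by (simp add: newton_poly_def)

lemma poly_newton_poly_node:
  assumes "j < m"
  shows "poly (newton_poly lam m) (lam j) = 0"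
  unfolding newton_poly_def poly_prod by (rule prod_zero) (use assms in auto)

lemma coeff_newton_poly_nonneg:
  fixes lam :: "nat \<Rightarrow> 'a::linordered_idom"
  assumes "\<And>i. i < m \<Longrightarrow> lam i \<le> 0"
  shows "coeff (newton_poly lam m) k \<ge> 0"
  using assms
proof (induction m arbitrary: k)
  case 0
  then show ?case by (simp add: newton_poly_def coeff_1)
next
  case (Suc m)
  have "coeff [:- lam m, 1:] j \<ge> 0" for j
    using Suc.prems[of m] by (cases j) (auto simp: coeff_pCons split: nat.split)
  then show ?case
    unfolding newton_poly_Suc using Suc by (intro coeff_mult_nonneg) auto
qed

text \<open>For distinct nodes, \<open>divdiff_weight lam m i\<close> is \<open>1 / (\<Prod>l\<le>m, l \<noteq> i. lam i - lam l)\<close>, the weight of \<open>f (lam i)\<close>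
  in the divided difference of \<open>f\<close> at \<open>lam 0, \<dots>, lam m\<close>. The recursion adds one node at a
  time; the weights of order \<open>m > 0\<close> sum to zero, which fixes the new one.\<close>

fun divdiff_weight :: "(nat \<Rightarrow> real) \<Rightarrow> nat \<Rightarrow> nat \<Rightarrow> real" where
  "divdiff_weight lam 0 i = (if i = 0 then 1 else 0)"
| "divdiff_weight lam (Suc m) i =
    (if i \<le> m then divdiff_weight lam m i / (lam i - lam (Suc m))
     else if i = Suc m then - (\<Sum>l\<le>m. divdiff_weight lam m l / (lam l - lam (Suc m)))
     else 0)"

declare divdiff_weight.simps(2) [simp del]

definition divdiff_exp :: "(nat \<Rightarrow> real) \<Rightarrow> nat \<Rightarrow> real \<Rightarrow> real" where
  "divdiff_exp lam m s = (\<Sum>i\<le>m. divdiff_weight lam m i * exp (lam i * s))"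

lemma divdiff_exp_0: "divdiff_exp lam 0 s = exp (lam 0 * s)"
  by (simp add: divdiff_exp_def)

lemma divdiff_exp_Suc_at_0: "divdiff_exp lam (Suc m) 0 = 0"
proof -
  have "(\<Sum>i\<le>m. divdiff_weight lam (Suc m) i) = (\<Sum>l\<le>m. divdiff_weight lam m l / (lam l - lam (Suc m)))"
    by (rule sum.cong) (auto simp: divdiff_weight.simps(2))
  then show ?thesis by (simp add: divdiff_exp_def divdiff_weight.simps(2))
qed

lemma has_real_derivative_divdiff_exp_0:
  "(divdiff_exp lam 0 has_real_derivative lam 0 * divdiff_exp lam 0 s) (at s)"
  unfolding divdiff_exp_0 by (auto intro!: derivative_eq_intros)

lemma has_real_derivative_divdiff_exp_Suc:
  assumes "inj_on lam {..Suc m}"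
  shows "(divdiff_exp lam (Suc m) has_real_derivative
           lam (Suc m) * divdiff_exp lam (Suc m) s + divdiff_exp lam m s) (at s)"
proof -
  let ?w = "divdiff_weight lam (Suc m)"
  have deriv: "(divdiff_exp lam (Suc m) has_real_derivative
           (\<Sum>i\<le>Suc m. ?w i * (lam i * exp (lam i * s)))) (at s)"
    unfolding divdiff_exp_def
    by (auto intro!: derivative_eq_intros sum.cong simp: algebra_simps)
  have weight: "?w i * (lam i - lam (Suc m)) = divdiff_weight lam m i" if "i \<le> m" for i
  proof -
    have "lam i \<noteq> lam (Suc m)" using that inj_onD[OF assms, of i "Suc m"] by auto
    then show ?thesis using that by (simp add: divdiff_weight.simps(2))
  qed
  have "(\<Sum>i\<le>Suc m. ?w i * (lam i * exp (lam i * s)))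
      = lam (Suc m) * divdiff_exp lam (Suc m) s
        + (\<Sum>i\<le>Suc m. ?w i * (lam i - lam (Suc m)) * exp (lam i * s))"
    unfolding divdiff_exp_def sum_distrib_left sum.distrib[symmetric]
    by (rule sum.cong) (simp_all add: algebra_simps)
  also have "(\<Sum>i\<le>Suc m. ?w i * (lam i - lam (Suc m)) * exp (lam i * s))
      = (\<Sum>i\<le>m. ?w i * (lam i - lam (Suc m)) * exp (lam i * s))"
    by simp
  also have "\<dots> = divdiff_exp lam m s"
    unfolding divdiff_exp_def by (rule sum.cong) (simp_all add: weight)
  finally show ?thesis using deriv by simp
qed

lemma divdiff_exp_nonneg:
  assumes "inj_on lam {..m}" "s \<ge> 0"
  shows "divdiff_exp lam m s \<ge> 0"
  using assms
proof (induction m arbitrary: s)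
  case 0
  then show ?case by (simp add: divdiff_exp_0)
next
  case (Suc m)
  have inj: "inj_on lam {..m}" using Suc.prems(1) by (rule inj_on_subset) auto
  show ?case
  proof (rule linear_ode_nonneg[where u = "divdiff_exp lam (Suc m)"])
    show "(divdiff_exp lam (Suc m) has_real_derivative
        lam (Suc m) * divdiff_exp lam (Suc m) r + divdiff_exp lam m r) (at r)" for r
      by (rule has_real_derivative_divdiff_exp_Suc[OF Suc.prems(1)])
    show "divdiff_exp lam m r \<ge> 0" if "r \<ge> 0" for r
      using Suc.IH[OF inj that] .
  qed (simp_all add: divdiff_exp_Suc_at_0 Suc.prems(2))
qed

definition exp_interpolant :: "(nat \<Rightarrow> real) \<Rightarrow> nat \<Rightarrow> real \<Rightarrow> real poly" where
  "exp_interpolant lam N s = (\<Sum>m\<le>N. smult (divdiff_exp lam m s) (newton_poly lam m))"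

lemma degree_exp_interpolant: "degree (exp_interpolant lam N s) \<le> N"
  unfolding exp_interpolant_def
  by (intro degree_sum_le order.trans[OF degree_smult_le] order.trans[OF degree_newton_poly]) auto

lemma coeff_exp_interpolant_nonneg:
  assumes "inj_on lam {..N}" "\<And>i. i < N \<Longrightarrow> lam i \<le> 0" "s \<ge> 0"
  shows "coeff (exp_interpolant lam N s) k \<ge> 0"
  unfolding exp_interpolant_def coeff_sum
proof (intro sum_nonneg)
  fix m assume m: "m \<in> {..N}"
  have "divdiff_exp lam m s \<ge> 0"
    using m assms by (intro divdiff_exp_nonneg) (auto intro: inj_on_subset)
  moreover have "coeff (newton_poly lam m) k \<ge> 0"
    using m assms(2) by (intro coeff_newton_poly_nonneg) auto
  ultimately show "coeff (smult (divdiff_exp lam m s) (newton_poly lam m)) k \<ge> 0" by simp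
qed

lemma poly_exp_interpolant_Suc:
  "poly (exp_interpolant lam (Suc N) s) x
     = poly (exp_interpolant lam N s) x + divdiff_exp lam (Suc N) s * poly (newton_poly lam (Suc N)) x"
  by (simp add: exp_interpolant_def)

lemma has_real_derivative_poly_exp_interpolant:
  assumes "inj_on lam {..N}"
  shows "((\<lambda>s. poly (exp_interpolant lam N s) x) has_real_derivative
      x * poly (exp_interpolant lam N s) x
      - divdiff_exp lam N s * poly (newton_poly lam (Suc N)) x) (at s)"
  using assms
proof (induction N)
  case 0
  show ?case
    by (auto simp: exp_interpolant_def newton_poly_def algebra_simps
        intro!: derivative_eq_intros has_real_derivative_divdiff_exp_0)
next
  case (Suc N)
  let ?P = "poly (newton_poly lam (Suc N)) x"
  have "inj_on lam {..N}" using Suc.prems by (rule inj_on_subset) auto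
  from DERIV_add[OF Suc.IH[OF this]
      DERIV_cmult_right[OF has_real_derivative_divdiff_exp_Suc[OF Suc.prems], of ?P]]
  show ?case
    by (simp add: poly_exp_interpolant_Suc newton_poly_Suc[of lam "Suc N"] algebra_simps)
qed

lemma poly_exp_interpolant_node:
  assumes "inj_on lam {..N}" "j \<le> N"
  shows "poly (exp_interpolant lam N s) (lam j) = exp (lam j * s)"
proof -
  have "poly (newton_poly lam (Suc N)) (lam j) = 0"
    using assms(2) by (intro poly_newton_poly_node) simp
  then have "((\<lambda>s. poly (exp_interpolant lam N s) (lam j)) has_real_derivative
      lam j * poly (exp_interpolant lam N s) (lam j)) (at s)" for s
    using has_real_derivative_poly_exp_interpolant[OF assms(1), of "lam j" s] by simp
  then have "poly (exp_interpolant lam N s) (lam j)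
      = poly (exp_interpolant lam N 0) (lam j) * exp (lam j * s)"
    by (rule linear_ode_solution)
  also have "poly (exp_interpolant lam N 0) (lam j) = 1"
    by (simp add: exp_interpolant_def sum.atMost_shift divdiff_exp_Suc_at_0 divdiff_exp_0
        newton_poly_def del: sum.atMost_Suc)
  finally show ?thesis by simp
qed

theorem proposition6:
  fixes n :: nat and lam :: "nat \<Rightarrow> real"
  assumes neg: "\<And>j. j < n \<Longrightarrow> lam j < 0"
    and distinct: "inj_on lam {..<n}"
  shows "\<forall>t \<ge> 0. \<forall>k < n. vandermonde_basis n lam k t \<ge> 0"
proof (intro allI impI)
  fix t :: real and k :: nat
  assume t: "t \<ge> 0" and k: "k < n"
  then obtain N where n: "n = Suc N" by (cases n) auto
  have inj: "inj_on lam {..N}" using distinct by (simp add: n lessThan_Suc_atMost)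
  have "vandermonde_basis n lam k t = coeff (exp_interpolant lam N t) k"
    using distinct k degree_exp_interpolant[of lam N t]
    by (intro vandermonde_basis_eq_coeff_interpolant)
      (auto simp: n less_Suc_eq_le intro: poly_exp_interpolant_node[OF inj])
  also have "\<dots> \<ge> 0"
    using neg t inj by (intro coeff_exp_interpolant_nonneg) (auto simp: n less_imp_le)
  finally show "vandermonde_basis n lam k t \<ge> 0" .
qed

end
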